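(* Assume $F$ is $K$-smooth with $\ell\in\mathrm{int}(K)$ and strongly $K$-convex with $\mu\in\mathrm{int}(K)$. Let $C_\ell:=\{c^*\in K^*:\langle c^*,\ell\rangle=1\}$ and let $\{x^k\}$ be generated from $x^0$ by $$x^{k+1}:=\arg\min_{x\in\mathbb{R}^n}\max_{c^*\in C_\ell}\langle c^*,JF(x^k)(x-x^k)\rangle+\tfrac12\|x-x^k\|^2,$$ assumed not to terminate ($x^{k+1}\ne x^k$ for all $k$). Then: (i) $\{x^k\}$ converges to an efficient solution $x^*$ of $\min_K F(x)$; (ii) $\|x^{k+1}-x^*\|\le\sqrt{1-1/\kappa_{F,\preceq_K}}\,\|x^k-x^*\|$ for all $k\ge0$, where $\kappa_{F,\preceq_K}:=\max_{c^*\in K^*\setminus\{0\}}\frac{\langle c^*,\ell\rangle}{\langle c^*,\mu\rangle}$.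
   Context: $K\subset\mathbb{R}^m$ closed convex pointed cone with nonempty interior; $y\preceq_K y'$ iff $y'-y\in K$. $K^*=\{c:\langle c,y\rangle\ge0\ \forall y\in K\}$. $F:\mathbb{R}^n\to\mathbb{R}^m$ differentiable with Jacobian $JF$. Strongly $K$-convex with $\mu\in K$: $JF(x)(y-x)+\tfrac12\|y-x\|^2\mu\preceq_K F(y)-F(x)$ $\forall x,y$. $K$-smooth with $\ell\in K$: $F(y)-F(x)\preceq_K JF(x)(y-x)+\tfrac12\|y-x\|^2\ell$ $\forall x,y$. $x^*$ is efficient if there is no $x$ with $F(x)\preceq_K F(x^* )$ and $F(x)\neq F(x^* )$. *)

theory Defs
  imports "HOL-Analysis.Analysis"
begin

definition proper_cone :: "'b::euclidean_space set \<Rightarrow> bool" where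
  "proper_cone K \<longleftrightarrow> cone K \<and> convex K \<and> closed K \<and>
     K \<inter> uminus ` K = {0} \<and> interior K \<noteq> {}"

definition Kle :: "'b::euclidean_space set \<Rightarrow> 'b \<Rightarrow> 'b \<Rightarrow> bool" where
  "Kle K y y' \<longleftrightarrow> y' - y \<in> K"

definition dual_cone :: "'b::euclidean_space set \<Rightarrow> 'b set" where
  "dual_cone K = {c. \<forall>y\<in>K. inner c y \<ge> 0}"

definition strongly_K_convex ::
  "'b::euclidean_space set \<Rightarrow> ('a::euclidean_space \<Rightarrow> 'b) \<Rightarrow> ('a \<Rightarrow> 'a \<Rightarrow> 'b) \<Rightarrow> 'b \<Rightarrow> bool" where
  "strongly_K_convex K F JF \<mu> \<longleftrightarrow>
     (\<forall>x y. Kle K (JF x (y - x) + ((1/2) * (norm (y - x))\<^sup>2) *\<^sub>R \<mu>) (F y - F x))"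

definition K_smooth ::
  "'b::euclidean_space set \<Rightarrow> ('a::euclidean_space \<Rightarrow> 'b) \<Rightarrow> ('a \<Rightarrow> 'a \<Rightarrow> 'b) \<Rightarrow> 'b \<Rightarrow> bool" where
  "K_smooth K F JF l \<longleftrightarrow>
     (\<forall>x y. Kle K (F y - F x) (JF x (y - x) + ((1/2) * (norm (y - x))\<^sup>2) *\<^sub>R l))"

definition efficient ::
  "'b::euclidean_space set \<Rightarrow> ('a \<Rightarrow> 'b) \<Rightarrow> 'a \<Rightarrow> bool" where
  "efficient K F xs \<longleftrightarrow> \<not> (\<exists>x. Kle K (F x) (F xs) \<and> F x \<noteq> F xs)"

definition C_set :: "'b::euclidean_space set \<Rightarrow> 'b \<Rightarrow> 'b set" where
  "C_set K l = {c \<in> dual_cone K. inner c l = 1}"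

text \<open>Subproblem objective at the iterate xk:
  max over c in C_l of <c, JF(xk)(x - xk)> + 1/2 |x - xk|^2 (the max is attained; written as Sup).\<close>
definition subproblem_obj ::
  "'b::euclidean_space set \<Rightarrow> ('a::euclidean_space \<Rightarrow> 'a \<Rightarrow> 'b) \<Rightarrow> 'b \<Rightarrow> 'a \<Rightarrow> 'a \<Rightarrow> real" where
  "subproblem_obj K JF l xk x =
     (SUP c\<in>C_set K l. inner c (JF xk (x - xk))) + (1/2) * (norm (x - xk))\<^sup>2"

text \<open>Condition number kappa = max over c in K^* minus 0 of <c,l>/<c,mu> (attained; written as Sup).\<close>
definition kappa :: "'b::euclidean_space set \<Rightarrow> 'b \<Rightarrow> 'b \<Rightarrow> real" where
  "kappa K l \<mu> = (SUP c\<in>dual_cone K - {0}. inner c l / inner c \<mu>)"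

end

theory Submission
  imports Defs
begin

(* Write phi_k(v) = max over c in C_l of <c, JF(x_k) v>; the iteration is the proximal step
   x_(k+1) = x_k + argmin (phi_k(v) + |v|^2/2), and phi_k is convex, so d = x_(k+1) - x_k satisfies
   the variational inequality phi_k(d) - phi_k(w) <= <d, w - d> for every w.
   K-smoothness with <c, l> = 1 makes every scalarisation <c, F>, c in C_l, decrease along the
   iterates, and strong K-convexity bounds its sublevel sets, so by compactness some p lies below
   all iterates in all these scalarisations. For w = p - x_k, strong K-convexity together with
   <c, mu> >= 1/kappa on C_l gives phi_k(w) <= phi_k(d) + |d|^2/2 - |w|^2/(2 kappa), and the
   variational inequality turns this into |x_(k+1) - p|^2 <= (1 - 1/kappa) |x_k - p|^2.
   Thus x_k -> p. Any point dominating p again lies below all iterates, hence is also the limit;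
   this forces p to be efficient. *)

lemma dual_cone_inner_ge_norm:
  fixes K :: "'b::euclidean_space set"
  assumes "y \<in> interior K"
  shows "\<exists>e>0. \<forall>c\<in>dual_cone K. e * norm c \<le> inner c y"
proof -
  obtain e where e: "e > 0" "ball y e \<subseteq> K" using assms mem_interior by blast
  have "(e/2) * norm c \<le> inner c y" if c: "c \<in> dual_cone K" for c
  proof (cases "c = 0")
    case False
    let ?u = "y - ((e/2) / norm c) *\<^sub>R c"
    have "?u \<in> K" using False e by (auto simp: dist_norm)
    then have "0 \<le> inner c ?u" using c by (auto simp: dual_cone_def)
    also have "inner c ?u = inner c y - (e/2) * norm c"
      using False by (simp add: inner_diff_right power2_norm_eq_inner[symmetric] power2_eq_square)
    finally show ?thesis by simp
  qed simp
  then show ?thesis using e by (intro exI[of _ "e/2"]) auto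
qed

lemma dual_cone_inner_interior_pos:
  fixes K :: "'b::euclidean_space set"
  assumes "y \<in> interior K" "c \<in> dual_cone K" "c \<noteq> 0"
  shows "0 < inner c y"
proof -
  obtain e where "e > 0" "e * norm c \<le> inner c y"
    using dual_cone_inner_ge_norm[OF assms(1)] assms(2) by blast
  moreover have "0 < e * norm c" using \<open>e > 0\<close> assms(3) by simp
  ultimately show ?thesis by linarith
qed

lemma dual_cone_nonzero:
  fixes K :: "'b::euclidean_space set"
  assumes cone: "cone K" and "convex K" "closed K" "K \<noteq> {}" and z: "z \<notin> K"
  shows "\<exists>c\<in>dual_cone K. c \<noteq> 0"
proof -
  obtain y0 where "y0 \<in> K" using assms(4) by blast
  then have "0 \<in> K" using cone unfolding cone_def by (metis order_refl scaleR_zero_left)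
  obtain a b where ab: "inner a z < b" "\<forall>y\<in>K. b < inner a y"
    using separating_hyperplane_closed_point[OF assms(2,3) z] by blast
  have b: "b < 0" using ab \<open>0 \<in> K\<close> by fastforce
  have "0 \<le> inner a y" if "y \<in> K" for y
  proof (rule ccontr)
    assume neg: "\<not> 0 \<le> inner a y"
    have "(b / inner a y) *\<^sub>R y \<in> K"
      using cone that neg b unfolding cone_def by (simp add: divide_nonpos_neg)
    then show False using ab neg by fastforce
  qed
  moreover have "a \<noteq> 0" using ab b by auto
  ultimately show ?thesis by (auto simp: dual_cone_def)
qed

lemma proper_cone_dual_cone_nonzero:
  fixes K :: "'b::euclidean_space set"
  assumes "proper_cone K"
  shows "\<exists>c\<in>dual_cone K. c \<noteq> 0"
proof -
  obtain b :: 'b where "b \<in> Basis" using nonempty_Basis by blast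
  then have "b \<noteq> 0" by auto
  then have "b \<notin> K \<or> -b \<notin> K"
    using assms unfolding proper_cone_def by (metis IntI image_eqI minus_minus singletonD)
  then obtain z where "z \<notin> K" by blast
  moreover have "K \<noteq> {}" using assms interior_subset by (auto simp: proper_cone_def)
  ultimately show ?thesis
    using assms dual_cone_nonzero[of K z] unfolding proper_cone_def by blast
qed

definition support_fun :: "'b::real_inner set \<Rightarrow> 'b \<Rightarrow> real" where
  "support_fun C y = (SUP c\<in>C. inner c y)"

lemma bdd_above_inner_image:
  fixes C :: "'b::real_inner set"
  assumes "bounded C"
  shows "bdd_above ((\<lambda>c. inner c y) ` C)"
proof -
  obtain B where "\<forall>c\<in>C. norm c \<le> B" using assms bounded_iff by blast
  then have "inner c y \<le> B * norm y" if "c \<in> C" for c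
    using that norm_cauchy_schwarz[of c y] mult_right_mono[of "norm c" B "norm y"] by force
  then show ?thesis by (intro bdd_aboveI2)
qed

lemma support_fun_upper: "bounded C \<Longrightarrow> c \<in> C \<Longrightarrow> inner c y \<le> support_fun C y"
  unfolding support_fun_def by (intro cSUP_upper bdd_above_inner_image)

lemma support_fun_least: "C \<noteq> {} \<Longrightarrow> (\<And>c. c \<in> C \<Longrightarrow> inner c y \<le> M) \<Longrightarrow> support_fun C y \<le> M"
  unfolding support_fun_def by (rule cSUP_least)

lemma support_fun_0 [simp]: "C \<noteq> {} \<Longrightarrow> support_fun C 0 = 0"
  by (simp add: support_fun_def)

lemma convex_on_support_fun_linear:
  assumes "linear A" "C \<noteq> {}" "bounded C"
  shows "convex_on UNIV (\<lambda>v. support_fun C (A v))"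
proof (rule convex_onI)
  fix t :: real and v w assume t: "0 < t" "t < 1"
  show "support_fun C (A ((1 - t) *\<^sub>R v + t *\<^sub>R w))
        \<le> (1 - t) * support_fun C (A v) + t * support_fun C (A w)"
  proof (rule support_fun_least[OF assms(2)])
    fix c assume c: "c \<in> C"
    have "inner c (A ((1 - t) *\<^sub>R v + t *\<^sub>R w)) = (1 - t) * inner c (A v) + t * inner c (A w)"
      using assms(1) by (simp add: linear_add linear_scale inner_add_right)
    also have "\<dots> \<le> (1 - t) * support_fun C (A v) + t * support_fun C (A w)"
      using t support_fun_upper[OF assms(3) c] by (intro add_mono mult_left_mono) auto
    finally show "inner c (A ((1 - t) *\<^sub>R v + t *\<^sub>R w)) \<le> \<dots>" .
  qed
qed simp

lemma prox_variational_inequality: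
  fixes f :: "'a::real_inner \<Rightarrow> real"
  assumes "convex_on UNIV f" and min: "\<And>v. f d + (norm d)\<^sup>2 / 2 \<le> f v + (norm v)\<^sup>2 / 2"
  shows "f d - f w \<le> inner d (w - d)"
proof (rule tendsto_le[OF trivial_limit_at_right_real])
  let ?r = "(norm (w - d))\<^sup>2 / 2"
  show "((\<lambda>t. inner d (w - d) + t * ?r) \<longlongrightarrow> inner d (w - d)) (at_right 0)"
    by (auto intro!: tendsto_eq_intros)
  have "f d - f w \<le> inner d (w - d) + t * ?r" if t: "0 < t" "t \<le> 1" for t
  proof -
    have "(norm (d + t *\<^sub>R (w - d)))\<^sup>2 = (norm d)\<^sup>2 + 2 * t * inner d (w - d) + t\<^sup>2 * (norm (w - d))\<^sup>2"
      unfolding power2_norm_eq_inner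
      by (simp add: inner_add_left inner_add_right inner_commute algebra_simps power2_eq_square)
    moreover have "f (d + t *\<^sub>R (w - d)) \<le> (1 - t) * f d + t * f w"
      using convex_onD[OF assms(1), of t d w] t by (simp add: algebra_simps)
    ultimately have "t * (f d - f w) \<le> t * (inner d (w - d) + t * ?r)"
      using min[of "d + t *\<^sub>R (w - d)"] by (simp add: algebra_simps power2_eq_square)
    then show ?thesis using t by simp
  qed
  then show "\<forall>\<^sub>F t in at_right 0. f d - f w \<le> inner d (w - d) + t * ?r"
    unfolding eventually_at_right_field by (intro exI[of _ 1]) auto
qed (rule tendsto_const)

lemma bounded_sublevel_strongly_convex:
  fixes g :: "'a::real_normed_vector \<Rightarrow> real"
  assumes L: "bounded_linear L" and m: "m > 0"
    and sconv: "\<And>z. L (z - y) + m / 2 * (norm (z - y))\<^sup>2 \<le> g z - g y"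
  shows "bounded {z. g z \<le> g y}"
proof -
  obtain B where B: "B > 0" "\<And>v. norm (L v) \<le> norm v * B"
    using bounded_linear.pos_bounded[OF L] by blast
  have "norm (z - y) \<le> 2 * B / m" if "g z \<le> g y" for z
  proof -
    let ?n = "norm (z - y)"
    have "m / 2 * ?n\<^sup>2 \<le> - L (z - y)" using sconv[of z] that by linarith
    also have "\<dots> \<le> ?n * B" using B(2)[of "z - y"] by (simp add: real_norm_def)
    finally have "?n * (m / 2 * ?n) \<le> ?n * B" by (simp add: power2_eq_square mult_ac)
    then have "?n = 0 \<or> m / 2 * ?n \<le> B"
      using mult_le_cancel_left_pos[of ?n] by (metis order_le_less norm_ge_zero)
    then show ?thesis using B m by (auto simp: field_simps)
  qed
  then have "norm z \<le> norm y + 2 * B / m" if "g z \<le> g y" for z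
    using that norm_triangle_sub[of z y] by fastforce
  then show ?thesis unfolding bounded_iff by blast
qed

lemma LIMSEQ_contracting:
  fixes x :: "nat \<Rightarrow> 'a::real_normed_vector"
  assumes q: "q < 1" and contr: "\<And>k. norm (x (Suc k) - p) \<le> q * norm (x k - p)"
  shows "x \<longlonglongrightarrow> p"
proof -
  define r where "r = max 0 q"
  have r: "0 \<le> r" "r < 1" using q by (auto simp: r_def)
  have r_contr: "norm (x (Suc k) - p) \<le> r * norm (x k - p)" for k
    using contr[of k] mult_right_mono[of q r "norm (x k - p)"] by (simp add: r_def)
  have bound: "norm (x k - p) \<le> r ^ k * norm (x 0 - p)" for k
  proof (induction k)
    case (Suc k)
    show ?case
      using r_contr[of k] mult_left_mono[OF Suc r(1)] by (simp add: mult.assoc)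
  qed simp
  have "(\<lambda>k. r ^ k) \<longlonglongrightarrow> 0"
    using r by (intro LIMSEQ_power_zero) simp
  then have "(\<lambda>k. r ^ k * norm (x 0 - p)) \<longlonglongrightarrow> 0"
    by (rule tendsto_mult_left_zero)
  then have "(\<lambda>k. x k - p) \<longlonglongrightarrow> 0"
    by (rule Lim_null_comparison[OF always_eventually, rotated]) (simp add: bound)
  then show ?thesis by (simp only: LIM_zero_iff)
qed

lemma le_sqrt_mult_if_power2_le:
  fixes a b s :: real
  assumes "0 \<le> a" "0 \<le> b" "a\<^sup>2 \<le> s * b\<^sup>2"
  shows "a \<le> sqrt s * b"
proof -
  \<comment> \<open>No sign condition on s: sqrt is odd, so real_sqrt_mult holds unconditionally.\<close>
  have "sqrt (a\<^sup>2) \<le> sqrt (s * b\<^sup>2)" using assms(3) by (rule real_sqrt_le_mono)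
  then show ?thesis using assms(1,2) by (simp add: real_sqrt_mult)
qed

locale vector_steepest_descent =
  fixes K :: "'b::euclidean_space set"
    and F :: "'a::euclidean_space \<Rightarrow> 'b"
    and JF :: "'a \<Rightarrow> 'a \<Rightarrow> 'b"
    and l \<mu> :: 'b
    and x :: "nat \<Rightarrow> 'a"
  assumes K: "proper_cone K"
    and deriv: "\<And>z. (F has_derivative JF z) (at z)"
    and smooth: "K_smooth K F JF l" and l_int: "l \<in> interior K"
    and sconv: "strongly_K_convex K F JF \<mu>" and mu_int: "\<mu> \<in> interior K"
    and step: "\<And>k z. subproblem_obj K JF l (x k) (x (Suc k)) \<le> subproblem_obj K JF l (x k) z"
begin

abbreviation C :: "'b set" where "C \<equiv> C_set K l"

lemma C_inner_nonneg: "c \<in> C \<Longrightarrow> v \<in> K \<Longrightarrow> 0 \<le> inner c v"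
  by (auto simp: C_set_def dual_cone_def)

lemma C_nonempty: "C \<noteq> {}"
proof -
  obtain c where c: "c \<in> dual_cone K" "c \<noteq> 0"
    using proper_cone_dual_cone_nonzero[OF K] by blast
  then have "0 < inner c l" using dual_cone_inner_interior_pos[OF l_int] by blast
  then have "(1 / inner c l) *\<^sub>R c \<in> C" using c by (auto simp: C_set_def dual_cone_def)
  then show ?thesis by blast
qed

lemma C_bounded: "bounded C"
proof -
  obtain e where e: "e > 0" "\<forall>c\<in>dual_cone K. e * norm c \<le> inner c l"
    using dual_cone_inner_ge_norm[OF l_int] by blast
  then have "norm c \<le> 1 / e" if "c \<in> C" for c
    using that by (auto simp: C_set_def field_simps mult.commute)
  then show ?thesis unfolding bounded_iff by blast
qed

lemma kappa_ge_ratio: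
  assumes "c \<in> dual_cone K" "c \<noteq> 0"
  shows "inner c l / inner c \<mu> \<le> kappa K l \<mu>"
proof -
  obtain e where e: "e > 0" "\<forall>c\<in>dual_cone K. e * norm c \<le> inner c \<mu>"
    using dual_cone_inner_ge_norm[OF mu_int] by blast
  have "inner c l / inner c \<mu> \<le> norm l / e" if c: "c \<in> dual_cone K" "c \<noteq> 0" for c
  proof -
    have pos: "0 < e * norm c" and le: "e * norm c \<le> inner c \<mu>" using c e by auto
    have "inner c l / inner c \<mu> \<le> norm c * norm l / inner c \<mu>"
      using norm_cauchy_schwarz[of c l] pos le by (intro divide_right_mono) auto
    also have "\<dots> \<le> norm c * norm l / (e * norm c)"
      using pos le by (intro divide_left_mono) auto
    also have "\<dots> = norm l / e" using c by simp
    finally show ?thesis .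
  qed
  then have "bdd_above ((\<lambda>c. inner c l / inner c \<mu>) ` (dual_cone K - {0}))"
    by (intro bdd_aboveI2) blast
  then show ?thesis unfolding kappa_def using assms by (intro cSUP_upper) auto
qed

lemma inverse_kappa_le: "c \<in> C \<Longrightarrow> 1 / kappa K l \<mu> \<le> inner c \<mu>"
  and kappa_pos: "0 < kappa K l \<mu>"
proof -
  have *: "0 < inner c \<mu> \<and> 1 / inner c \<mu> \<le> kappa K l \<mu>" if "c \<in> C" for c
  proof -
    have c: "c \<in> dual_cone K" "c \<noteq> 0" using that by (auto simp: C_set_def)
    then show ?thesis
      using kappa_ge_ratio[OF c] dual_cone_inner_interior_pos[OF mu_int c] that
      by (simp add: C_set_def)
  qed
  obtain c0 where "c0 \<in> C" using C_nonempty by blast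
  then show "0 < kappa K l \<mu>"
    using * by (meson less_le_trans zero_less_divide_1_iff)
  show "1 / kappa K l \<mu> \<le> inner c \<mu>" if "c \<in> C"
    using *[OF that] le_imp_inverse_le[of "1 / inner c \<mu>" "kappa K l \<mu>"]
    by (simp add: inverse_eq_divide)
qed

lemma linear_JF: "linear (JF z)"
  using deriv has_derivative_linear by blast

lemma subproblem_obj_eq:
  "subproblem_obj K JF l y z = support_fun C (JF y (z - y)) + (norm (z - y))\<^sup>2 / 2"
  by (simp add: subproblem_obj_def support_fun_def)

lemma step_model_nonpos:
  "support_fun C (JF (x k) (x (Suc k) - x k)) + (norm (x (Suc k) - x k))\<^sup>2 / 2 \<le> 0"
  using step[of k "x k"] by (simp add: subproblem_obj_eq linear_0[OF linear_JF] C_nonempty)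

lemma inner_F_step_le:
  assumes c: "c \<in> C"
  shows "inner c (F (x (Suc k))) \<le> inner c (F (x k))
           + support_fun C (JF (x k) (x (Suc k) - x k)) + (norm (x (Suc k) - x k))\<^sup>2 / 2"
proof -
  let ?d = "x (Suc k) - x k"
  have "0 \<le> inner c (JF (x k) ?d + ((1/2) * (norm ?d)\<^sup>2) *\<^sub>R l - (F (x (Suc k)) - F (x k)))"
    using smooth C_inner_nonneg[OF c] by (auto simp: K_smooth_def Kle_def)
  moreover have "inner c l = 1" using c by (simp add: C_set_def)
  moreover have "inner c (JF (x k) ?d) \<le> support_fun C (JF (x k) ?d)"
    using support_fun_upper[OF C_bounded c] .
  ultimately show ?thesis by (simp add: inner_diff_right inner_add_right)
qed

lemma inner_F_antimono:
  assumes "c \<in> C" "m \<le> n"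
  shows "inner c (F (x n)) \<le> inner c (F (x m))"
proof -
  have "decseq (\<lambda>j. inner c (F (x j)))"
  proof (rule decseq_SucI)
    show "inner c (F (x (Suc j))) \<le> inner c (F (x j))" for j
      using inner_F_step_le[OF assms(1), of j] step_model_nonpos[of j] by linarith
  qed
  then show ?thesis using assms(2) by (simp add: decseq_def)
qed

definition below_iterates :: "'a \<Rightarrow> bool" where
  "below_iterates p \<longleftrightarrow> (\<forall>j. \<forall>c\<in>C. inner c (F p) \<le> inner c (F (x j)))"

lemma support_fun_towards_below_iterates:
  assumes "below_iterates p"
  shows "support_fun C (JF (x k) (p - x k))
           \<le> support_fun C (JF (x k) (x (Suc k) - x k)) + (norm (x (Suc k) - x k))\<^sup>2 / 2
              - (norm (p - x k))\<^sup>2 / (2 * kappa K l \<mu>)"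
proof (rule support_fun_least[OF C_nonempty])
  fix c assume c: "c \<in> C"
  let ?w = "p - x k"
  have "0 \<le> inner c (F p - F (x k) - (JF (x k) ?w + ((1/2) * (norm ?w)\<^sup>2) *\<^sub>R \<mu>))"
    using sconv C_inner_nonneg[OF c] by (auto simp: strongly_K_convex_def Kle_def)
  moreover have "(norm ?w)\<^sup>2 / (2 * kappa K l \<mu>) \<le> (1/2) * (norm ?w)\<^sup>2 * inner c \<mu>"
    using mult_left_mono[OF inverse_kappa_le[OF c], of "(norm ?w)\<^sup>2 / 2"] by simp
  moreover have "inner c (F p) \<le> inner c (F (x (Suc k)))"
    using assms c by (simp add: below_iterates_def)
  ultimately show "inner c (JF (x k) ?w) \<le> support_fun C (JF (x k) (x (Suc k) - x k))
      + (norm (x (Suc k) - x k))\<^sup>2 / 2 - (norm ?w)\<^sup>2 / (2 * kappa K l \<mu>)"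
    using inner_F_step_le[OF c, of k] by (simp add: inner_diff_right inner_add_right)
qed

lemma iterate_dist_contraction_sq:
  assumes "below_iterates p"
  shows "(norm (x (Suc k) - p))\<^sup>2 \<le> (1 - 1 / kappa K l \<mu>) * (norm (x k - p))\<^sup>2"
proof -
  define f where "f v = support_fun C (JF (x k) v)" for v
  define d where "d = x (Suc k) - x k"
  define w where "w = p - x k"
  have "f d + (norm d)\<^sup>2 / 2 \<le> f v + (norm v)\<^sup>2 / 2" for v
    using step[of k "x k + v"] by (simp add: subproblem_obj_eq f_def d_def)
  then have "f d - f w \<le> inner d (w - d)"
    using convex_on_support_fun_linear[OF linear_JF C_nonempty C_bounded]
    by (intro prox_variational_inequality) (simp_all add: f_def)
  moreover have "f w \<le> f d + (norm d)\<^sup>2 / 2 - (norm w)\<^sup>2 / (2 * kappa K l \<mu>)"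
    using support_fun_towards_below_iterates[OF assms] by (simp add: f_def d_def w_def)
  moreover have "(norm (d - w))\<^sup>2 = (norm d)\<^sup>2 - 2 * inner d w + (norm w)\<^sup>2"
    unfolding power2_norm_eq_inner by (simp add: inner_diff_left inner_diff_right inner_commute)
  moreover have "inner d (w - d) = inner d w - (norm d)\<^sup>2"
    by (simp add: inner_diff_right power2_norm_eq_inner)
  ultimately have "(norm (d - w))\<^sup>2 \<le> (1 - 1 / kappa K l \<mu>) * (norm w)\<^sup>2"
    by (simp add: algebra_simps)
  then show ?thesis by (simp add: d_def w_def norm_minus_commute)
qed

lemma iterate_dist_contraction:
  "below_iterates p \<Longrightarrow> norm (x (Suc k) - p) \<le> sqrt (1 - 1 / kappa K l \<mu>) * norm (x k - p)"
  using iterate_dist_contraction_sq by (intro le_sqrt_mult_if_power2_le) auto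

lemma tendsto_below_iterates: "below_iterates p \<Longrightarrow> x \<longlonglongrightarrow> p"
  using iterate_dist_contraction kappa_pos by (intro LIMSEQ_contracting) auto

lemma bounded_sublevel_inner_F:
  assumes "c \<in> C"
  shows "bounded {z. inner c (F z) \<le> inner c (F y)}"
proof (rule bounded_sublevel_strongly_convex)
  show "bounded_linear (\<lambda>v. inner c (JF y v))"
    using deriv by (intro bounded_linear_inner_right_comp has_derivative_bounded_linear)
  show "0 < inner c \<mu>"
    using inverse_kappa_le[OF assms] kappa_pos by (meson less_le_trans zero_less_divide_1_iff)
  show "inner c (JF y (z - y)) + inner c \<mu> / 2 * (norm (z - y))\<^sup>2 \<le> inner c (F z) - inner c (F y)"
    for z
  proof -
    have "F z - F y - (JF y (z - y) + ((1/2) * (norm (z - y))\<^sup>2) *\<^sub>R \<mu>) \<in> K"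
      using sconv by (simp add: strongly_K_convex_def Kle_def)
    from C_inner_nonneg[OF assms this] show ?thesis
      by (simp add: inner_diff_right inner_add_right algebra_simps)
  qed
qed

lemma below_iterates_exists: "\<exists>p. below_iterates p"
proof -
  define S where "S j = {z. \<forall>c\<in>C. inner c (F z) \<le> inner c (F (x j))}" for j
  have "continuous_on UNIV F"
    using deriv has_derivative_continuous by (blast intro: continuous_at_imp_continuous_on)
  then have cont: "continuous_on UNIV (\<lambda>z. inner c (F z))" for c
    by (intro continuous_on_inner continuous_on_const)
  have "S j = (\<Inter>c\<in>C. {z. inner c (F z) \<le> inner c (F (x j))})" for j
    by (auto simp: S_def)
  then have closed: "closed (S j)" for j
    by (simp only:) (intro closed_INT ballI closed_Collect_le cont continuous_on_const)
  have mono: "S n \<subseteq> S m" if "m \<le> n" for m n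
    using inner_F_antimono[OF _ that] by (fastforce simp: S_def)
  obtain c0 where "c0 \<in> C" using C_nonempty by blast
  then have "S 0 \<subseteq> {z. inner c0 (F z) \<le> inner c0 (F (x 0))}" by (auto simp: S_def)
  then have "bounded (S j)" for j
    using bounded_sublevel_inner_F[OF \<open>c0 \<in> C\<close>] mono[of 0 j] by (blast intro: bounded_subset)
  then have "compact (S j)" for j using closed by (simp add: compact_eq_bounded_closed)
  moreover have "S j \<noteq> {}" for j by (auto simp: S_def)
  ultimately obtain p where "p \<in> \<Inter>(range S)" using compact_nest[of S] mono by blast
  then show ?thesis by (auto simp: below_iterates_def S_def)
qed

lemma below_iterates_efficient:
  assumes p: "below_iterates p"
  shows "efficient K F p"
  unfolding efficient_def
proof
  assume "\<exists>y. Kle K (F y) (F p) \<and> F y \<noteq> F p"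
  then obtain y where y: "Kle K (F y) (F p)" "F y \<noteq> F p" by blast
  have "inner c (F y) \<le> inner c (F p)" if "c \<in> C" for c
    using C_inner_nonneg[OF that y(1)[unfolded Kle_def]] by (simp add: inner_diff_right)
  with p have "below_iterates y" unfolding below_iterates_def by (meson order_trans)
  then have "y = p"
    using LIMSEQ_unique tendsto_below_iterates p by blast
  then show False using y by simp
qed

end

theorem lemma4p3:
  fixes K :: "'b::euclidean_space set"
    and F :: "'a::euclidean_space \<Rightarrow> 'b"
    and JF :: "'a \<Rightarrow> 'a \<Rightarrow> 'b"
    and l \<mu> :: 'b
    and x :: "nat \<Rightarrow> 'a"
  assumes K: "proper_cone K"
    and deriv: "\<And>z. (F has_derivative JF z) (at z)"
    and smooth: "K_smooth K F JF l" and l_int: "l \<in> interior K"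
    and sconv: "strongly_K_convex K F JF \<mu>" and mu_int: "\<mu> \<in> interior K"
    and step: "\<And>k z. subproblem_obj K JF l (x k) (x (Suc k)) \<le> subproblem_obj K JF l (x k) z"
    and nonterm: "\<And>k. x (Suc k) \<noteq> x k"
  shows "\<exists>xs. x \<longlonglongrightarrow> xs \<and> efficient K F xs \<and>
           (\<forall>k. norm (x (Suc k) - xs) \<le> sqrt (1 - 1 / kappa K l \<mu>) * norm (x k - xs))"
proof -
  interpret vector_steepest_descent K F JF l \<mu> x
    using K deriv smooth l_int sconv mu_int step by unfold_locales
  obtain p where p: "below_iterates p" using below_iterates_exists by blast
  show ?thesis
    using tendsto_below_iterates[OF p] below_iterates_efficient[OF p] iterate_dist_contraction[OF p]
    by blast
qed

end
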